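(* A matrix $M\in\mathbb{R}_+^{p\times q}$ with $\operatorname{rank}(M)\ge 2$ is a slack matrix of some polytope if and only if $$\operatorname{conv}(\text{rows of }M)=\operatorname{aff}(\text{rows of }M)\cap\mathbb{R}_+^q.$$
   Context: For a polytope $P\subseteq\mathbb{R}^n$ with $\dim(P)\ge 1$, a slack matrix of $P$ is any matrix $S=[\mathbb{1},V]\cdot[w,-W]^T\in\mathbb{R}^{p\times q}$ (so $S_{ij}=w_j-W_jv_i$, with $v_i$ the $i$th row of $V$ and $W_j$ the $j$th row of $W$), where $V\in\mathbb{R}^{p\times n}$ satisfies $P=\operatorname{conv}(\text{rows of }V)$ and $W\in\mathbb{R}^{q\times n}$, $w\in\mathbb{R}^q$ satisfy $P=\{x\in\mathbb{R}^n: Wx\le w\}$. A matrix is a slack matrix of some polytope if it is a slack matrix of some polytope of dimension at least one. $\operatorname{aff}$ denotes affine hull. *)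

theory Defs
  imports "HOL-Analysis.Analysis" "HOL-Library.Function_Algebras"
begin

text \<open>Points of R^n are encoded as functions nat => real vanishing outside {0..<n}.
  To use the library notions convex hull / affine hull on them, we equip
  nat => real (more generally 'a => 'b for a real vector space 'b) with the
  pointwise real vector space structure.\<close>

instantiation "fun" :: (type, real_vector) real_vector
begin
definition scaleR_fun :: "real \<Rightarrow> ('a \<Rightarrow> 'b) \<Rightarrow> 'a \<Rightarrow> 'b"
  where "scaleR_fun r f = (\<lambda>x. r *\<^sub>R f x)"
instance
  by standard (simp_all add: scaleR_fun_def fun_eq_iff scaleR_add_right scaleR_add_left)
end

definition Rn :: "nat \<Rightarrow> (nat \<Rightarrow> real) set" where
  "Rn n = {x. \<forall>k\<ge>n. x k = 0}"

text \<open>S is a slack matrix of the polytope P in R^n: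
  S = [1,V] [w,-W]^T with P = conv(rows of V) and P = {x. W x \<le> w}.\<close>
definition slack_matrix_of :: "nat \<Rightarrow> (nat \<Rightarrow> real) set \<Rightarrow> real^'q^'p \<Rightarrow> bool" where
  "slack_matrix_of n P S \<longleftrightarrow>
     (\<exists>(V :: 'p \<Rightarrow> nat \<Rightarrow> real) (W :: 'q \<Rightarrow> nat \<Rightarrow> real) (w :: 'q \<Rightarrow> real).
        (\<forall>i. V i \<in> Rn n) \<and> (\<forall>j. W j \<in> Rn n) \<and>
        P = convex hull (range V) \<and>
        P = {x \<in> Rn n. \<forall>j. (\<Sum>k<n. W j k * x k) \<le> w j} \<and>
        (\<forall>i j. S $ i $ j = w j - (\<Sum>k<n. W j k * V i k)))"

definition dim_ge_1 :: "(nat \<Rightarrow> real) set \<Rightarrow> bool" where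
  "dim_ge_1 P \<longleftrightarrow> (\<exists>x\<in>P. \<exists>y\<in>P. x \<noteq> y)"

definition is_slack_matrix :: "real^'q^'p \<Rightarrow> bool" where
  "is_slack_matrix S \<longleftrightarrow> (\<exists>n P. dim_ge_1 P \<and> slack_matrix_of n P S)"

end

theory Submission
  imports Defs
begin

text \<open>Both directions rest on the slack map \<open>x \<mapsto> w - W x\<close>, an affine map from \<open>\<real>\<^sup>n\<close>
  to \<open>\<real>\<^sup>q\<close> sending the vertices of \<open>P\<close> to the rows of \<open>M\<close>. Affine maps commute with convex
  and affine hulls, and \<open>P\<close> is exactly the preimage of the nonnegative orthant inside \<open>\<real>\<^sup>n\<close>;
  so the convex hull of the rows is the part of their affine hull lying in the orthant.
  Conversely, choosing a base point and a basis of the directions of the affine hull of the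
  rows gives an injective affine chart \<open>\<real>\<^sup>n \<rightarrow> aff(rows)\<close>; its coefficients define \<open>W\<close> and \<open>w\<close>,
  the preimages of the rows are the vertices, and the hull condition says precisely that
  their convex hull is cut out by \<open>W x \<le> w\<close>. The rank hypothesis only serves to make the
  polytope at least one-dimensional.\<close>

lemma subspace_Rn: "subspace (Rn n)"
  unfolding subspace_def Rn_def by (simp add: scaleR_fun_def)

lemma rows_eq_range: "rows (M :: 'a::zero^'n^'m) = range (\<lambda>i. M $ i)"
  unfolding rows_def row_def by (auto simp: vec_eq_iff)

lemma affine_linear_image:
  assumes "linear f" "affine S"
  shows "affine (f ` S)"
  unfolding affine_def
proof (intro ballI allI impI)
  fix y z u v assume "y \<in> f ` S" "z \<in> f ` S" "(u::real) + v = 1"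
  then obtain y' z' where "y' \<in> S" "z' \<in> S" "y = f y'" "z = f z'" by blast
  have "u *\<^sub>R y' + v *\<^sub>R z' \<in> S"
    using assms(2) \<open>y' \<in> S\<close> \<open>z' \<in> S\<close> \<open>u + v = 1\<close> unfolding affine_def by blast
  moreover have "u *\<^sub>R y + v *\<^sub>R z = f (u *\<^sub>R y' + v *\<^sub>R z')"
    using assms(1) \<open>y = f y'\<close> \<open>z = f z'\<close> by (simp add: linear_add linear_scale)
  ultimately show "u *\<^sub>R y + v *\<^sub>R z \<in> f ` S"
    by blast
qed

lemma affine_hull_affine_image_subset:
  assumes "linear L"
  shows "affine hull ((\<lambda>x. c + L x) ` S) \<subseteq> (\<lambda>x. c + L x) ` (affine hull S)"
proof (rule hull_minimal)
  show "(\<lambda>x. c + L x) ` S \<subseteq> (\<lambda>x. c + L x) ` (affine hull S)"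
    by (intro image_mono hull_subset)
  have "(\<lambda>x. c + L x) ` (affine hull S) = (+) c ` L ` (affine hull S)"
    by (simp add: image_image)
  then show "affine ((\<lambda>x. c + L x) ` (affine hull S))"
    using affine_linear_image[OF assms affine_affine_hull] affine_translation by metis
qed

lemma convex_hull_affine_image:
  assumes "linear L"
  shows "convex hull ((\<lambda>x. c + L x) ` S) = (\<lambda>x. c + L x) ` (convex hull S)"
proof -
  have "(\<lambda>x. c + L x) ` T = (\<lambda>x. c + x) ` L ` T" for T
    by (simp add: image_image)
  then show ?thesis
    by (simp add: convex_hull_translation convex_hull_linear_image[OF assms])
qed

lemma convex_hull_affine_image_eq_affine_hull_Int:
  assumes L: "linear L" and U: "affine U" "S \<subseteq> U"
    and conv: "convex hull S = {x \<in> U. c + L x \<in> K}"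
  shows "convex hull ((\<lambda>x. c + L x) ` S) = affine hull ((\<lambda>x. c + L x) ` S) \<inter> K"
proof
  show "convex hull ((\<lambda>x. c + L x) ` S) \<subseteq> affine hull ((\<lambda>x. c + L x) ` S) \<inter> K"
    using convex_hull_subset_affine_hull[of "(\<lambda>x. c + L x) ` S"] conv
    by (auto simp: convex_hull_affine_image[OF L])
  have "affine hull S \<subseteq> U"
    using U by (rule hull_minimal[rotated])
  show "affine hull ((\<lambda>x. c + L x) ` S) \<inter> K \<subseteq> convex hull ((\<lambda>x. c + L x) ` S)"
  proof
    fix y assume y: "y \<in> affine hull ((\<lambda>x. c + L x) ` S) \<inter> K"
    then obtain x where "x \<in> affine hull S" "y = c + L x"
      using affine_hull_affine_image_subset[OF L, of c S] by blast
    with y \<open>affine hull S \<subseteq> U\<close> have "x \<in> convex hull S"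
      unfolding conv by blast
    with \<open>y = c + L x\<close> show "y \<in> convex hull ((\<lambda>x. c + L x) ` S)"
      by (simp add: convex_hull_affine_image[OF L])
  qed
qed

lemma convex_hull_eq_affine_preimage:
  assumes L: "linear L" and U: "convex U" "S \<subseteq> U"
    and inj: "inj_on (\<lambda>x. c + L x) U"
    and onto: "(\<lambda>x. c + L x) ` U \<subseteq> affine hull ((\<lambda>x. c + L x) ` S)"
    and hull_eq: "convex hull ((\<lambda>x. c + L x) ` S) = affine hull ((\<lambda>x. c + L x) ` S) \<inter> K"
  shows "convex hull S = {x \<in> U. c + L x \<in> K}"
proof
  have "convex hull S \<subseteq> U"
    using U by (rule hull_minimal[rotated])
  then show "convex hull S \<subseteq> {x \<in> U. c + L x \<in> K}"
    using hull_eq by (auto simp: convex_hull_affine_image[OF L])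
  show "{x \<in> U. c + L x \<in> K} \<subseteq> convex hull S"
  proof safe
    fix x assume x: "x \<in> U" "c + L x \<in> K"
    then have "c + L x \<in> convex hull ((\<lambda>x. c + L x) ` S)"
      using onto hull_eq by blast
    then obtain y where y: "y \<in> convex hull S" "c + L x = c + L y"
      by (auto simp: convex_hull_affine_image[OF L])
    with \<open>convex hull S \<subseteq> U\<close> have "y = x"
      using inj x(1) by (metis inj_onD subsetD)
    with y show "x \<in> convex hull S" by simp
  qed
qed

lemma linear_coefficient_sum: "linear (\<lambda>x. \<Sum>k<n. x k *\<^sub>R b k)"
  by (rule linearI) (auto simp: scaleR_fun_def sum.distrib scaleR_add_left scaleR_sum_right)

lemma span_eq_coefficient_image:
  fixes B :: "'a::real_vector set"
  assumes fin: "finite B" and ind: "independent B"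
  obtains n b where "inj_on (\<lambda>x. \<Sum>k<n. x k *\<^sub>R b k) (Rn n)"
    and "(\<lambda>x. \<Sum>k<n. x k *\<^sub>R b k) ` Rn n = span B"
proof -
  define n where "n = card B"
  obtain b where b: "bij_betw b {..<n} B"
    using ex_bij_betw_nat_finite[OF fin] unfolding n_def atLeast0LessThan by blast
  then have inj_b: "inj_on b {..<n}" and b_in: "\<And>k. k < n \<Longrightarrow> b k \<in> B"
    by (auto simp: bij_betw_def)
  have reindex: "(\<Sum>v\<in>B. u v *\<^sub>R v) = (\<Sum>k<n. u (b k) *\<^sub>R b k)" for u
    using sum.reindex_bij_betw[OF b, of "\<lambda>v. u v *\<^sub>R v"] by simp
  let ?L = "\<lambda>x. \<Sum>k<n. x k *\<^sub>R b k"
  have "?L ` Rn n \<subseteq> span B"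
    by (auto intro!: span_sum span_scale intro: span_base b_in)
  moreover have "span B \<subseteq> ?L ` Rn n"
  proof
    fix y assume "y \<in> span B"
    then obtain u where "y = (\<Sum>v\<in>B. u v *\<^sub>R v)"
      using span_finite[OF fin] by auto
    then have "y = ?L (\<lambda>k. if k < n then u (b k) else 0)"
      by (simp add: reindex)
    moreover have "(\<lambda>k. if k < n then u (b k) else 0) \<in> Rn n"
      by (simp add: Rn_def)
    ultimately show "y \<in> ?L ` Rn n"
      by (rule image_eqI)
  qed
  moreover have "inj_on ?L (Rn n)"
    unfolding linear_inj_on_iff_eq_0[OF linear_coefficient_sum subspace_Rn]
  proof safe
    fix x assume x: "x \<in> Rn n" and "?L x = 0"
    define u where "u v = x (inv_into {..<n} b v)" for v
    have "(\<Sum>v\<in>B. u v *\<^sub>R v) = 0"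
      using \<open>?L x = 0\<close> by (simp add: reindex u_def inv_into_f_f[OF inj_b])
    then have "\<forall>v\<in>B. u v = 0"
      using ind dependent_finite[OF fin] by blast
    then have "x k = 0" if "k < n" for k
      using b_in[OF that] that inv_into_f_f[OF inj_b, of k] by (auto simp: u_def)
    moreover have "x k = 0" if "k \<ge> n" for k
      using x that by (simp add: Rn_def)
    ultimately show "x = 0"
      by (simp add: fun_eq_iff) (meson not_le)
  qed
  ultimately show ?thesis using that by blast
qed

lemma affine_hull_parametrization:
  fixes T :: "'a::euclidean_space set"
  assumes "a \<in> T"
  obtains n b where "inj_on (\<lambda>x. a + (\<Sum>k<n. x k *\<^sub>R b k)) (Rn n)"
    and "(\<lambda>x. a + (\<Sum>k<n. x k *\<^sub>R b k)) ` Rn n = affine hull T"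
proof -
  define D where "D = (\<lambda>x. - a + x) ` T"
  obtain B where "B \<subseteq> D" "independent B" "D \<subseteq> span B"
    by (rule maximal_independent_subset)
  then have "finite B"
    by (simp add: finiteI_independent)
  have "B \<subseteq> span D"
    using \<open>B \<subseteq> D\<close> span_superset by (rule subset_trans)
  then have span_B: "span B = span D"
    using \<open>D \<subseteq> span B\<close> by (simp add: span_eq)
  obtain n b where inj: "inj_on (\<lambda>x. \<Sum>k<n. x k *\<^sub>R b k) (Rn n)"
    and img: "(\<lambda>x. \<Sum>k<n. x k *\<^sub>R b k) ` Rn n = span B"
    using \<open>finite B\<close> \<open>independent B\<close> by (rule span_eq_coefficient_image)
  have "(\<lambda>x. a + (\<Sum>k<n. x k *\<^sub>R b k)) ` Rn n
      = (\<lambda>x. a + x) ` (\<lambda>x. \<Sum>k<n. x k *\<^sub>R b k) ` Rn n"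
    by (simp only: image_image)
  also have "\<dots> = (\<lambda>x. a + x) ` span D"
    by (simp only: img span_B)
  also have "\<dots> = affine hull T"
    unfolding D_def by (rule affine_hull_span_gen[OF hull_inc, symmetric]) (fact assms)
  finally show ?thesis
    using that inj by (simp add: inj_on_def)
qed

definition slack_vector :: "nat \<Rightarrow> ('q \<Rightarrow> nat \<Rightarrow> real) \<Rightarrow> ('q \<Rightarrow> real) \<Rightarrow> (nat \<Rightarrow> real) \<Rightarrow> real^'q"
  where "slack_vector n W w x = (\<chi> j. w j - (\<Sum>k<n. W j k * x k))"

lemma slack_vector_affine:
  obtains L where "linear L" and "slack_vector n W w = (\<lambda>x. (\<chi> j. w j) + L x)"
proof
  show "linear (\<lambda>x. \<chi> j. - (\<Sum>k<n. W j k * x k))"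
    by (rule linearI) (auto simp: vec_eq_iff scaleR_fun_def sum.distrib sum_distrib_left
        algebra_simps sum_negf)
qed (simp add: slack_vector_def fun_eq_iff vec_eq_iff)

lemma slack_matrix_of_altdef:
  "slack_matrix_of n P S \<longleftrightarrow>
     (\<exists>V W w. (\<forall>i. V i \<in> Rn n) \<and> (\<forall>j. W j \<in> Rn n) \<and> P = convex hull (range V) \<and>
        P = {x \<in> Rn n. slack_vector n W w x \<in> {y. \<forall>j. 0 \<le> y $ j}} \<and>
        (\<forall>i. S $ i = slack_vector n W w (V i)))"
  unfolding slack_matrix_of_def slack_vector_def by (simp add: vec_eq_iff)

lemma hull_condition_if_slack_matrix_of:
  assumes "slack_matrix_of n P M"
  shows "convex hull (rows M) = affine hull (rows M) \<inter> {x. \<forall>j. 0 \<le> x $ j}"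
proof -
  obtain V W w where V: "\<forall>i. V i \<in> Rn n" and P: "P = convex hull (range V)"
    "P = {x \<in> Rn n. slack_vector n W w x \<in> {y. \<forall>j. 0 \<le> y $ j}}"
    and M: "\<forall>i. M $ i = slack_vector n W w (V i)"
    using assms unfolding slack_matrix_of_altdef by blast
  obtain L where L: "linear L" and f: "slack_vector n W w = (\<lambda>x. (\<chi> j. w j) + L x)"
    by (rule slack_vector_affine)
  have rows: "rows M = (\<lambda>x. (\<chi> j. w j) + L x) ` range V"
    using M f by (auto simp: rows_eq_range)
  show ?thesis
    unfolding rows
    by (rule convex_hull_affine_image_eq_affine_hull_Int[OF L subspace_imp_affine[OF subspace_Rn]])
      (use V P f in auto)
qed

lemma is_slack_matrix_if_hull_condition:
  fixes M :: "real^'q^'p"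
  assumes hull_eq: "convex hull (rows M) = affine hull (rows M) \<inter> {x. \<forall>j. 0 \<le> x $ j}"
    and i12: "M $ i1 \<noteq> M $ i2"
  shows "is_slack_matrix M"
proof -
  have "M $ i1 \<in> rows M"
    by (simp add: rows_eq_range)
  then obtain n b where inj: "inj_on (\<lambda>x. M $ i1 + (\<Sum>k<n. x k *\<^sub>R b k)) (Rn n)"
    and img: "(\<lambda>x. M $ i1 + (\<Sum>k<n. x k *\<^sub>R b k)) ` Rn n = affine hull (rows M)"
    by (rule affine_hull_parametrization)
  let ?g = "\<lambda>x. M $ i1 + (\<Sum>k<n. x k *\<^sub>R b k)"
  define W :: "'q \<Rightarrow> nat \<Rightarrow> real" where "W j k = (if k < n then - (b k $ j) else 0)" for j k
  define w where "w j = M $ i1 $ j" for j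
  have "(\<Sum>k<n. W j k * x k) = - (\<Sum>k<n. x k * b k $ j)" for j x
    unfolding sum_negf[symmetric] by (rule sum.cong) (simp_all add: W_def)
  then have f: "slack_vector n W w x = ?g x" for x
    by (simp add: slack_vector_def vec_eq_iff w_def)
  have "\<And>i. M $ i \<in> ?g ` Rn n"
    unfolding img by (rule hull_inc) (simp add: rows_eq_range)
  define V where "V i = inv_into (Rn n) ?g (M $ i)" for i
  have V: "V i \<in> Rn n" and gV: "?g (V i) = M $ i" for i
    unfolding V_def using \<open>\<And>i. M $ i \<in> ?g ` Rn n\<close>
    by (rule inv_into_into, rule f_inv_into_f)
  have rows: "rows M = ?g ` range V"
    unfolding rows_eq_range image_image gV ..
  define P where "P = convex hull (range V)"
  have "P = {x \<in> Rn n. ?g x \<in> {y. \<forall>j. 0 \<le> y $ j}}"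
    unfolding P_def
  proof (rule convex_hull_eq_affine_preimage[OF linear_coefficient_sum])
    show "convex (Rn n)"
      by (rule subspace_imp_convex[OF subspace_Rn])
    show "range V \<subseteq> Rn n"
      using V by blast
    show "?g ` Rn n \<subseteq> affine hull (?g ` range V)"
      by (simp only: img rows)
    show "inj_on ?g (Rn n)"
      by (fact inj)
    show "convex hull (?g ` range V) = affine hull (?g ` range V) \<inter> {y. \<forall>j. 0 \<le> y $ j}"
      using hull_eq by (simp only: rows)
  qed
  moreover have "W j \<in> Rn n" for j
    by (simp add: W_def Rn_def)
  ultimately have "slack_matrix_of n P M"
    unfolding slack_matrix_of_altdef
    by (intro exI[of _ V] exI[of _ W] exI[of _ w]) (simp add: f V gV P_def)
  moreover have "V i1 \<noteq> V i2"
    using i12 gV by metis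
  then have "dim_ge_1 P"
    unfolding dim_ge_1_def P_def by (blast intro: hull_inc)
  ultimately show ?thesis
    unfolding is_slack_matrix_def by blast
qed

lemma rank_ge_2_imp_distinct_rows:
  fixes M :: "real^'q^'p"
  assumes "rank M \<ge> 2"
  obtains i1 i2 where "M $ i1 \<noteq> M $ i2"
proof -
  have "\<not> (\<forall>i. M $ i = M $ undefined)"
  proof
    assume "\<forall>i. M $ i = M $ undefined"
    then have "rows M \<subseteq> {M $ undefined}"
      by (auto simp: rows_eq_range)
    then have "dim (rows M) \<le> dim {M $ undefined}"
      by (rule dim_subset)
    also have "\<dots> \<le> 1"
      by simp
    finally show False
      using assms unfolding row_rank_def by simp
  qed
  then show thesis
    using that by blast
qed

theorem corollary2p8:
  fixes M :: "real^'q^'p"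
  assumes "\<forall>i j. 0 \<le> M $ i $ j"
    and "rank M \<ge> 2"
  shows "is_slack_matrix M \<longleftrightarrow>
           convex hull (rows M) = affine hull (rows M) \<inter> {x. \<forall>j. 0 \<le> x $ j}"
proof
  assume "is_slack_matrix M"
  then obtain n P where "slack_matrix_of n P M"
    unfolding is_slack_matrix_def by blast
  then show "convex hull (rows M) = affine hull (rows M) \<inter> {x. \<forall>j. 0 \<le> x $ j}"
    by (rule hull_condition_if_slack_matrix_of)
next
  assume "convex hull (rows M) = affine hull (rows M) \<inter> {x. \<forall>j. 0 \<le> x $ j}"
  moreover obtain i1 i2 where "M $ i1 \<noteq> M $ i2"
    using assms(2) by (rule rank_ge_2_imp_distinct_rows)
  ultimately show "is_slack_matrix M"
    by (rule is_slack_matrix_if_hull_condition)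
qed

end
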